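(* Consider the Clipped FedSMD algorithm described in the context, and assume: (i) for every $i\in[m]$, conditionally on the past, $\mathbb E[\widehat\nabla f_i(x)\mid x]=\nabla f_i(x)$ and $\mathbb E[\|\widehat\nabla f_i(x)-\nabla f_i(x)\|^p\mid x]\le\sigma^p$ for some $\sigma>0$, $p\in(1,2]$; (ii) (separate convexity) for every $x\in\mathcal X$, all $y_1,\dots,y_m\in\mathcal X$ and all $a_1,\dots,a_m\ge0$ with $\sum_j a_j=1$, $D_\Phi(x\|\sum_j a_jy_j)\le\sum_j a_jD_\Phi(x\|y_j)$. Let $x^*\in\mathcal X$ be a minimizer of $f=\sum_{i=1}^m f_i$ over $\mathcal X$. Then for every $t\in[T]$, $$\sum_{i=1}^m\big\langle\alpha_t\widetilde\nabla_{\lambda_t}f_i(x_{i,t}),x_{i,t}-x^*\big\rangle\le\sum_{i=1}^m\big[D_\Phi(x^*\|x_{i,t})-D_\Phi(x^*\|x_{i,t+1})\big]+\frac{\alpha_t^2}{2}\sum_{i=1}^m\big\|\widetilde\nabla_{\lambda_t}f_i(x_{i,t})\big\|^2 .$$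
   Context: Setting: $m,n\in\mathbb N$, $\|\cdot\|$ is the Euclidean norm on $\mathbb R^n$, $\mathcal{X}\subset\mathbb R^n$ is a nonempty closed convex set, $f_i:\mathcal{X}\to\mathbb R$ ($i\in[m]$) are convex differentiable functions and $f=\sum_i f_i$ has a minimizer $x^*$ on $\mathcal X$. $\Phi:\mathcal{X}\to\mathbb R$ is differentiable and $1$-strongly convex, i.e. $\Phi(x)-\Phi(y)\ge\langle\nabla\Phi(y),x-y\rangle+\frac12\|x-y\|^2$, and $D_\Phi(x\|y)=\Phi(x)-\Phi(y)-\langle\nabla\Phi(y),x-y\rangle$. At a query point $x$, agent $i$ receives a random vector $\widehat\nabla f_i(x)$. For $\lambda>0$, $\widetilde\nabla_\lambda f_i(x)=\min\{1,\lambda/\|\widehat\nabla f_i(x)\|\}\,\widehat\nabla f_i(x)$. Clipped FedSMD: communication period $\mathcal P\in\mathbb N$, rounds $\mathcal T$, communication instants $\mathcal I=\{1+k\mathcal P:k=1,\dots,\mathcal T\}$, horizon $T=1+\mathcal T\mathcal P$, positive stepsizes $(\alpha_t)$, positive clipping parameters $(\lambda_t)$. Starting from $x_{i,1}\in\mathcal X$, for $t=1,\dots,T$ and each agent $i$: $y_{i,t+1}=\arg\min_{x\in\mathcal X}\{\langle\widetilde\nabla_{\lambda_t}f_i(x_{i,t}),x\rangle+\frac1{\alpha_t}D_\Phi(x\|x_{i,t})\}$; if $t+1\in\mathcal I$ then $x_{i,t+1}=\frac1m\sum_{j=1}^m y_{j,t+1}$, otherwise $x_{i,t+1}=y_{i,t+1}$.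 *)

theory Defs
  imports "HOL-Analysis.Analysis"
begin

definition bregman :: "('a::euclidean_space \<Rightarrow> real) \<Rightarrow> ('a \<Rightarrow> 'a) \<Rightarrow> 'a \<Rightarrow> 'a \<Rightarrow> real" where
  "bregman Phi gPhi x y = Phi x - Phi y - gPhi y \<bullet> (x - y)"

definition clip :: "real \<Rightarrow> 'a::euclidean_space \<Rightarrow> 'a" where
  "clip lam g = min 1 (lam / norm g) *\<^sub>R g"

end

theory Submission
  imports Defs
begin

(* Per agent, the optimality condition of the mirror step, the three-point identity of the
   Bregman divergence and strong convexity of Phi (absorbing the linear error term by Young's
   inequality) give the classical one-step bound, with D(x* || y_{i,t+1}) in place of
   D(x* || x_{i,t+1}).  At a communication instant every agent receives the average of the y_{j,t+1},
   and by separate convexity this can only decrease the summed divergence to x*. *)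

lemma convex_minimum_derivative_nonneg:
  fixes h :: "'a::real_inner \<Rightarrow> real"
  assumes "convex X" "y \<in> X" "z \<in> X"
    and h_deriv: "(h has_derivative (\<lambda>d. g \<bullet> d)) (at y within X)"
    and y_min: "\<forall>w\<in>X. h y \<le> h w"
  shows "0 \<le> g \<bullet> (z - y)"
proof -
  define p where "p s = y + s *\<^sub>R (z - y)" for s :: real
  have p_mem: "p s \<in> X" if "s \<in> {0..1}" for s
  proof -
    have "p s = (1 - s) *\<^sub>R y + s *\<^sub>R z" by (simp add: p_def algebra_simps)
    then show ?thesis using assms(1-3) that by (auto intro: convexD_alt)
  qed
  have "((\<lambda>s. h (p s)) has_derivative (\<lambda>s. g \<bullet> (s *\<^sub>R (z - y)))) (at 0 within {0..1})"
  proof (rule has_derivative_in_compose[where f = p])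
    show "(p has_derivative (\<lambda>s. s *\<^sub>R (z - y))) (at 0 within {0..1})"
      unfolding p_def by (auto intro!: derivative_eq_intros)
    have "p ` {0..1} \<subseteq> X" using p_mem by blast
    then show "(h has_derivative (\<lambda>d. g \<bullet> d)) (at (p 0) within p ` {0..1})"
      using has_derivative_subset[OF h_deriv] by (simp add: p_def)
  qed
  then have "((\<lambda>s. h (p s)) has_real_derivative g \<bullet> (z - y)) (at 0 within {0..1})"
    by (simp add: has_field_derivative_def mult_commute_abs)
  then have "((\<lambda>s. (h (p s) - h (p 0)) / (s - 0)) \<longlongrightarrow> g \<bullet> (z - y)) (at 0 within {0..1})"
    by (simp add: has_field_derivative_iff)
  moreover have "\<forall>\<^sub>F s in at 0 within {0..1}. 0 \<le> (h (p s) - h (p 0)) / (s - 0)"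
    unfolding eventually_at_filter
    by (rule always_eventually) (use y_min p_mem in \<open>auto simp: p_def\<close>)
  moreover have "at (0::real) within {0..1} \<noteq> bot"
    by (simp add: at_within_Icc_at_right)
  ultimately show ?thesis by (rule tendsto_lowerbound)
qed

lemma bregman_three_point:
  "bregman Phi gPhi z u - bregman Phi gPhi z v - bregman Phi gPhi v u = (gPhi v - gPhi u) \<bullet> (z - v)"
  by (simp add: bregman_def inner_diff_left inner_diff_right algebra_simps)

lemma inner_le_half_norm_sq:
  fixes u v :: "'a::real_inner"
  shows "u \<bullet> v \<le> (norm u)\<^sup>2 / 2 + (norm v)\<^sup>2 / 2"
proof -
  have "0 \<le> (norm (u - v))\<^sup>2" by simp
  then show ?thesis by (simp add: power2_norm_eq_inner inner_diff_left inner_diff_right inner_commute)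
qed

lemma mirror_descent_step_bound:
  fixes X :: "'a::euclidean_space set"
  assumes "convex X" "u \<in> X" "v \<in> X" "z \<in> X" "a > 0"
    and Phi_deriv: "(Phi has_derivative (\<lambda>h. gPhi v \<bullet> h)) (at v within X)"
    and Phi_strong: "Phi v - Phi u \<ge> gPhi u \<bullet> (v - u) + 1/2 * (norm (v - u))\<^sup>2"
    and v_argmin: "\<forall>w\<in>X. g \<bullet> v + bregman Phi gPhi v u / a \<le> g \<bullet> w + bregman Phi gPhi w u / a"
  shows "a * (g \<bullet> (u - z)) \<le> bregman Phi gPhi z u - bregman Phi gPhi z v + a\<^sup>2 / 2 * (norm g)\<^sup>2"
proof -
  let ?D = "bregman Phi gPhi"
  have "((\<lambda>w. a * (g \<bullet> w) + ?D w u) has_derivative (\<lambda>d. (a *\<^sub>R g + gPhi v - gPhi u) \<bullet> d))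
      (at v within X)"
    unfolding bregman_def using Phi_deriv
    by (auto intro!: derivative_eq_intros simp: inner_diff_left inner_add_left algebra_simps)
  moreover have "\<forall>w\<in>X. a * (g \<bullet> v) + ?D v u \<le> a * (g \<bullet> w) + ?D w u"
  proof
    fix w assume "w \<in> X"
    then have "a * (g \<bullet> v + ?D v u / a) \<le> a * (g \<bullet> w + ?D w u / a)"
      using v_argmin \<open>a > 0\<close> by (simp add: mult_left_mono)
    then show "a * (g \<bullet> v) + ?D v u \<le> a * (g \<bullet> w) + ?D w u"
      using \<open>a > 0\<close> by (simp add: distrib_left)
  qed
  ultimately have optimality: "0 \<le> (a *\<^sub>R g + gPhi v - gPhi u) \<bullet> (z - v)"
    using convex_minimum_derivative_nonneg[OF assms(1,3,4)] by blast
  have strong: "1/2 * (norm (v - u))\<^sup>2 \<le> ?D v u"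
    using Phi_strong by (simp add: bregman_def)
  have young: "a * (g \<bullet> (u - v)) \<le> a\<^sup>2 / 2 * (norm g)\<^sup>2 + 1/2 * (norm (v - u))\<^sup>2"
    using inner_le_half_norm_sq[of "a *\<^sub>R g" "u - v"] \<open>a > 0\<close>
    by (simp add: power_mult_distrib norm_minus_commute)
  have "a * (g \<bullet> (u - z)) = a * (g \<bullet> (u - v)) - (a *\<^sub>R g) \<bullet> (z - v)"
    by (simp add: inner_diff_right algebra_simps)
  also have "\<dots> \<le> a * (g \<bullet> (u - v)) + (gPhi v - gPhi u) \<bullet> (z - v)"
    using optimality by (simp add: inner_add_left inner_diff_left)
  also have "\<dots> = a * (g \<bullet> (u - v)) + ?D z u - ?D z v - ?D v u"
    using bregman_three_point[of Phi gPhi z u v] by simp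
  also have "\<dots> \<le> ?D z u - ?D z v + a\<^sup>2 / 2 * (norm g)\<^sup>2"
    using young strong by simp
  finally show ?thesis .
qed

lemma average_mem_convex:
  assumes "convex X" "m \<ge> 1" "\<forall>j\<in>{1..m}. ys j \<in> X"
  shows "(1 / real m) *\<^sub>R (\<Sum>j=1..m. ys j) \<in> X"
proof -
  have "(\<Sum>j=1..m. (1 / real m) *\<^sub>R ys j) \<in> X"
    using assms by (intro convex_sum) auto
  then show ?thesis by (simp add: scaleR_sum_right)
qed

lemma sum_at_average_le:
  fixes ys :: "nat \<Rightarrow> 'a::real_vector"
  assumes "m \<ge> 1" and ys_mem: "\<forall>j\<in>{1..m}. ys j \<in> X"
    and jensen: "\<forall>ys a. (\<forall>j\<in>{1..m}. ys j \<in> X \<and> a j \<ge> 0) \<and> (\<Sum>j=1..m. a j) = 1 \<longrightarrow>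
          h (\<Sum>j=1..m. a j *\<^sub>R ys j) \<le> (\<Sum>j=1..m. a j * h (ys j))"
  shows "real m * h ((1 / real m) *\<^sub>R (\<Sum>j=1..m. ys j)) \<le> (\<Sum>j=1..m. h (ys j))"
proof -
  have "h (\<Sum>j=1..m. (1 / real m) *\<^sub>R ys j) \<le> (\<Sum>j=1..m. (1 / real m) * h (ys j))"
    using jensen[rule_format, of ys "\<lambda>_. 1 / real m"] ys_mem \<open>m \<ge> 1\<close> by simp
  then have "h ((1 / real m) *\<^sub>R (\<Sum>j=1..m. ys j)) \<le> (\<Sum>j=1..m. (1 / real m) * h (ys j))"
    by (simp only: scaleR_sum_right)
  then have "real m * h ((1 / real m) *\<^sub>R (\<Sum>j=1..m. ys j)) \<le> real m * (\<Sum>j=1..m. (1 / real m) * h (ys j))"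
    by (simp add: mult_left_mono)
  then show ?thesis
    using \<open>m \<ge> 1\<close> by (simp add: sum_distrib_left)
qed

lemma sum_after_optional_averaging_le:
  fixes ys :: "nat \<Rightarrow> 'a::real_vector"
  assumes "m \<ge> 1" and ys_mem: "\<forall>j\<in>{1..m}. ys j \<in> X"
    and jensen: "\<forall>ys a. (\<forall>j\<in>{1..m}. ys j \<in> X \<and> a j \<ge> 0) \<and> (\<Sum>j=1..m. a j) = 1 \<longrightarrow>
          h (\<Sum>j=1..m. a j *\<^sub>R ys j) \<le> (\<Sum>j=1..m. a j * h (ys j))"
    and update: "\<forall>i\<in>{1..m}. xs' i = (if c then (1 / real m) *\<^sub>R (\<Sum>j=1..m. ys j) else ys i)"
  shows "(\<Sum>i=1..m. h (xs' i)) \<le> (\<Sum>i=1..m. h (ys i))"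
proof (cases c)
  case True
  then have "(\<Sum>i=1..m. h (xs' i)) = (\<Sum>i=1..m. h ((1 / real m) *\<^sub>R (\<Sum>j=1..m. ys j)))"
    using update by (intro sum.cong) auto
  also have "\<dots> = real m * h ((1 / real m) *\<^sub>R (\<Sum>j=1..m. ys j))"
    by simp
  also have "\<dots> \<le> (\<Sum>j=1..m. h (ys j))"
    using sum_at_average_le[OF assms(1-3)] .
  finally show ?thesis .
next
  case False
  then show ?thesis using update by simp
qed

lemma iterates_mem:
  assumes "convex X" "m \<ge> 1"
    and x_init: "\<forall>i\<in>{1..m}. x i 1 \<in> X"
    and y_mem: "\<forall>i\<in>{1..m}. \<forall>s\<in>{1..N}. y i (Suc s) \<in> X"
    and x_update: "\<forall>i\<in>{1..m}. \<forall>s\<in>{1..N}.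
          x i (Suc s) = (if Suc s \<in> I then (1 / real m) *\<^sub>R (\<Sum>j=1..m. y j (Suc s)) else y i (Suc s))"
    and "s \<in> {1..N}" "i \<in> {1..m}"
  shows "x i s \<in> X"
proof -
  have "1 \<le> s" "s \<le> N" using \<open>s \<in> {1..N}\<close> by auto
  then show ?thesis
    using \<open>i \<in> {1..m}\<close>
  proof (induction s arbitrary: i rule: nat_induct_at_least)
    case base
    then show ?case using x_init by simp
  next
    case (Suc s)
    then have "s \<in> {1..N}" by simp
    then have "(1 / real m) *\<^sub>R (\<Sum>j=1..m. y j (Suc s)) \<in> X"
      using y_mem by (intro average_mem_convex[OF \<open>convex X\<close> \<open>m \<ge> 1\<close>]) auto
    then show ?case
      using x_update y_mem \<open>s \<in> {1..N}\<close> \<open>i \<in> {1..m}\<close> by auto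
  qed
qed


theorem proposition2:
  fixes X :: "'a::euclidean_space set"
    and f :: "nat \<Rightarrow> 'a \<Rightarrow> real"
    and Phi :: "'a \<Rightarrow> real" and gPhi :: "'a \<Rightarrow> 'a"
    and m P Tc :: nat
    and alpha lam :: "nat \<Rightarrow> real"
    and ghat :: "nat \<Rightarrow> nat \<Rightarrow> 'a"
    and x y :: "nat \<Rightarrow> nat \<Rightarrow> 'a"
    and xs :: 'a and t :: nat
  assumes m_pos: "m \<ge> 1" and P_pos: "P \<ge> 1"
    and X_ne: "X \<noteq> {}" and X_closed: "closed X" and X_convex: "convex X"
    and f_convex: "\<forall>i\<in>{1..m}. convex_on X (f i)"
    and f_diff: "\<forall>i\<in>{1..m}. \<forall>z\<in>X. f i differentiable (at z within X)"
    and Phi_grad: "\<forall>z\<in>X. (Phi has_derivative (\<lambda>h. gPhi z \<bullet> h)) (at z within X)"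
    and Phi_strong: "\<forall>u\<in>X. \<forall>v\<in>X. Phi u - Phi v \<ge> gPhi v \<bullet> (u - v) + (1/2) * (norm (u - v))\<^sup>2"
    and sep_convex: "\<forall>z\<in>X. \<forall>ys a. (\<forall>j\<in>{1..m}. ys j \<in> X \<and> a j \<ge> 0) \<and> (\<Sum>j=1..m. a j) = 1 \<longrightarrow>
          bregman Phi gPhi z (\<Sum>j=1..m. a j *\<^sub>R ys j) \<le> (\<Sum>j=1..m. a j * bregman Phi gPhi z (ys j))"
    and alpha_pos: "\<forall>s. alpha s > 0" and lam_pos: "\<forall>s. lam s > 0"
    and x_init: "\<forall>i\<in>{1..m}. x i 1 \<in> X"
    and y_mem: "\<forall>i\<in>{1..m}. \<forall>s\<in>{1..1 + Tc * P}. y i (Suc s) \<in> X"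
    and y_argmin: "\<forall>i\<in>{1..m}. \<forall>s\<in>{1..1 + Tc * P}. \<forall>z\<in>X.
          clip (lam s) (ghat i s) \<bullet> y i (Suc s) + bregman Phi gPhi (y i (Suc s)) (x i s) / alpha s
          \<le> clip (lam s) (ghat i s) \<bullet> z + bregman Phi gPhi z (x i s) / alpha s"
    and x_update: "\<forall>i\<in>{1..m}. \<forall>s\<in>{1..1 + Tc * P}.
          x i (Suc s) = (if Suc s \<in> {1 + k * P | k. k \<in> {1..Tc}}
                         then (1 / real m) *\<^sub>R (\<Sum>j=1..m. y j (Suc s))
                         else y i (Suc s))"
    and xs_mem: "xs \<in> X"
    and xs_min: "\<forall>z\<in>X. (\<Sum>i=1..m. f i xs) \<le> (\<Sum>i=1..m. f i z)"
    and t_range: "t \<in> {1..1 + Tc * P}"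
  shows "(\<Sum>i=1..m. (alpha t *\<^sub>R clip (lam t) (ghat i t)) \<bullet> (x i t - xs))
         \<le> (\<Sum>i=1..m. bregman Phi gPhi xs (x i t) - bregman Phi gPhi xs (x i (Suc t)))
           + (alpha t)\<^sup>2 / 2 * (\<Sum>i=1..m. (norm (clip (lam t) (ghat i t)))\<^sup>2)"
proof -
  let ?D = "bregman Phi gPhi"
  let ?g = "\<lambda>i. clip (lam t) (ghat i t)"
  have agent_step: "(alpha t *\<^sub>R ?g i) \<bullet> (x i t - xs)
      \<le> ?D xs (x i t) - ?D xs (y i (Suc t)) + (alpha t)\<^sup>2 / 2 * (norm (?g i))\<^sup>2"
    if "i \<in> {1..m}" for i
  proof -
    have "x i t \<in> X"
      using iterates_mem[OF X_convex m_pos x_init _ x_update t_range that] y_mem by blast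
    moreover have "y i (Suc t) \<in> X" using y_mem that t_range by blast
    ultimately show ?thesis
      using mirror_descent_step_bound[OF X_convex _ _ xs_mem, of "x i t" "y i (Suc t)" "alpha t"]
        Phi_grad Phi_strong y_argmin that t_range alpha_pos by simp
  qed
  have communication: "(\<Sum>i=1..m. ?D xs (x i (Suc t))) \<le> (\<Sum>i=1..m. ?D xs (y i (Suc t)))"
  proof (rule sum_after_optional_averaging_le[OF m_pos, where h = "?D xs" and X = X])
    show "\<forall>i\<in>{1..m}. x i (Suc t) = (if Suc t \<in> {1 + k * P | k. k \<in> {1..Tc}}
        then (1 / real m) *\<^sub>R (\<Sum>j=1..m. y j (Suc t)) else y i (Suc t))"
      using x_update t_range by blast
  qed (use y_mem t_range sep_convex xs_mem in auto)
  have "(\<Sum>i=1..m. (alpha t *\<^sub>R ?g i) \<bullet> (x i t - xs))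
      \<le> (\<Sum>i=1..m. ?D xs (x i t) - ?D xs (y i (Suc t)) + (alpha t)\<^sup>2 / 2 * (norm (?g i))\<^sup>2)"
    using agent_step by (rule sum_mono)
  also have "\<dots> \<le> (\<Sum>i=1..m. ?D xs (x i t) - ?D xs (x i (Suc t))) + (alpha t)\<^sup>2 / 2 * (\<Sum>i=1..m. (norm (?g i))\<^sup>2)"
    using communication by (simp add: sum.distrib sum_subtractf sum_distrib_left)
  finally show ?thesis .
qed

end
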